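(* Let $D=(V,A)$ be a digraph, $k\in\mathbb{N}$, and $\mathcal{B}_i=(V_i,A_i)$ $(i<k)$ pairwise edge-disjoint branchings in $D$ such that for every nonempty $X\subseteq V$, $\varrho_{D\setminus\!\setminus\mathcal{B}}(X)\geq|\{i<k:V_i\cap X=\varnothing\}|$. Then for every $w\in V$ there is a system of pairwise edge-disjoint paths $\{P_i\}_{i<k}$ in $D\setminus\!\setminus\mathcal{B}$ such that $P_i$ goes from $V_i$ to $w$ for each $i<k$.
   Context: Digraphs may be of arbitrary cardinality with multiple edges. A branching is a digraph whose weakly connected components are arborescences (directed trees in which every vertex is reachable from the root). $D\setminus\!\setminus\mathcal{B}=(V,A\setminus\bigcup_{i<k}A_i)$. $\varrho_H(X)$ is the cardinality of the set of edges of $H$ with tail outside $X$ and head in $X$. Paths are directed simple paths; a path $P$ goes from $X$ to $Y$ if $V(P)\cap X=\{\mathrm{start}(P)\}$ and $V(P)\cap Y=\{\mathrm{end}(P)\}$ (start and end may coincide). *)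

theory Defs
  imports Main
begin

text \<open>Digraphs with multiple edges: a vertex set V, an edge set A, and global
  incidence functions tail, head from edges to vertices.\<close>

definition joins :: "('e \<Rightarrow> 'v) \<Rightarrow> ('e \<Rightarrow> 'v) \<Rightarrow> 'e \<Rightarrow> 'v \<Rightarrow> 'v \<Rightarrow> bool" where
  "joins tail head e u v \<longleftrightarrow> (tail e = u \<and> head e = v) \<or> (tail e = v \<and> head e = u)"

definition is_digraph :: "('e \<Rightarrow> 'v) \<Rightarrow> ('e \<Rightarrow> 'v) \<Rightarrow> 'v set \<Rightarrow> 'e set \<Rightarrow> bool" where
  "is_digraph tail head V A \<longleftrightarrow> (\<forall>e\<in>A. tail e \<in> V \<and> head e \<in> V)"

definition is_path :: "('e \<Rightarrow> 'v) \<Rightarrow> ('e \<Rightarrow> 'v) \<Rightarrow> 'v set \<Rightarrow> 'e set \<Rightarrow> 'v list \<Rightarrow> 'e list \<Rightarrow> bool" where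
  "is_path tail head V A vs es \<longleftrightarrow>
     vs \<noteq> [] \<and> distinct vs \<and> set vs \<subseteq> V \<and> length vs = Suc (length es) \<and>
     (\<forall>j<length es. es ! j \<in> A \<and> tail (es ! j) = vs ! j \<and> head (es ! j) = vs ! Suc j)"

definition path_from_to :: "('e \<Rightarrow> 'v) \<Rightarrow> ('e \<Rightarrow> 'v) \<Rightarrow> 'v set \<Rightarrow> 'e set \<Rightarrow> 'v list \<Rightarrow> 'e list
    \<Rightarrow> 'v set \<Rightarrow> 'v set \<Rightarrow> bool" where
  "path_from_to tail head V A vs es X Y \<longleftrightarrow>
     is_path tail head V A vs es \<and> set vs \<inter> X = {hd vs} \<and> set vs \<inter> Y = {last vs}"

definition reachable :: "('e \<Rightarrow> 'v) \<Rightarrow> ('e \<Rightarrow> 'v) \<Rightarrow> 'v set \<Rightarrow> 'e set \<Rightarrow> 'v \<Rightarrow> 'v \<Rightarrow> bool" where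
  "reachable tail head V A u v \<longleftrightarrow>
     (\<exists>vs es. is_path tail head V A vs es \<and> hd vs = u \<and> last vs = v)"

text \<open>Cycle in the underlying undirected multigraph (loops and parallel edges count).\<close>
definition has_ucycle :: "('e \<Rightarrow> 'v) \<Rightarrow> ('e \<Rightarrow> 'v) \<Rightarrow> 'v set \<Rightarrow> 'e set \<Rightarrow> bool" where
  "has_ucycle tail head V A \<longleftrightarrow>
     (\<exists>vs es. length es \<ge> 1 \<and> length vs = length es \<and> distinct vs \<and> distinct es \<and>
        set vs \<subseteq> V \<and> set es \<subseteq> A \<and>
        (\<forall>j<length es. joins tail head (es ! j) (vs ! j) (vs ! ((Suc j) mod length es))))"

text \<open>Arborescence: a directed tree (underlying multigraph a tree) with a root from
  which every vertex is reachable (connectivity follows from reachability).\<close>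
definition arborescence :: "('e \<Rightarrow> 'v) \<Rightarrow> ('e \<Rightarrow> 'v) \<Rightarrow> 'v set \<Rightarrow> 'e set \<Rightarrow> bool" where
  "arborescence tail head V A \<longleftrightarrow>
     is_digraph tail head V A \<and> \<not> has_ucycle tail head V A \<and>
     (\<exists>r\<in>V. \<forall>v\<in>V. reachable tail head V A r v)"

definition weak_adj :: "('e \<Rightarrow> 'v) \<Rightarrow> ('e \<Rightarrow> 'v) \<Rightarrow> 'e set \<Rightarrow> 'v \<Rightarrow> 'v \<Rightarrow> bool" where
  "weak_adj tail head A u v \<longleftrightarrow> (\<exists>e\<in>A. joins tail head e u v)"

definition wcomp :: "('e \<Rightarrow> 'v) \<Rightarrow> ('e \<Rightarrow> 'v) \<Rightarrow> 'v set \<Rightarrow> 'e set \<Rightarrow> 'v \<Rightarrow> 'v set" where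
  "wcomp tail head V A v = {u \<in> V. (weak_adj tail head A)\<^sup>*\<^sup>* v u}"

definition branching :: "('e \<Rightarrow> 'v) \<Rightarrow> ('e \<Rightarrow> 'v) \<Rightarrow> 'v set \<Rightarrow> 'e set \<Rightarrow> bool" where
  "branching tail head V A \<longleftrightarrow>
     is_digraph tail head V A \<and>
     (\<forall>v\<in>V. arborescence tail head (wcomp tail head V A v)
                {e \<in> A. tail e \<in> wcomp tail head V A v \<and> head e \<in> wcomp tail head V A v})"

definition in_edges :: "('e \<Rightarrow> 'v) \<Rightarrow> ('e \<Rightarrow> 'v) \<Rightarrow> 'e set \<Rightarrow> 'v set \<Rightarrow> 'e set" where
  "in_edges tail head A X = {e \<in> A. tail e \<notin> X \<and> head e \<in> X}"

end

theory Submission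
  imports Defs
begin

text \<open>Add a new source with one arc to a hub for each i < k, and arcs from hub i to every
  vertex of V_i.  A vertex set Y containing w but not the source is entered by at least
  \<open>\<rho>(X) + |{i. V_i \<inter> X \<noteq> {}}| \<ge> k\<close> arcs, where X is the part of Y in D, so by the
  edge version of Menger's theorem there are k arc-disjoint paths from the source to w.
  Menger's theorem is proved by augmenting finite unit flows, so D may be infinite.  The paths
  leave the source through distinct hubs, one for each i; dropping their first two arcs and
  cutting each at its last vertex in V_i gives the required paths.\<close>

definition excess :: "('e \<Rightarrow> 'v) \<Rightarrow> ('e \<Rightarrow> 'v) \<Rightarrow> 'e set \<Rightarrow> 'v \<Rightarrow> int" where
  "excess tail head F v = (\<Sum>e\<in>F. of_bool (head e = v) - of_bool (tail e = v))"

lemma excess_empty [simp]: "excess tail head {} v = 0"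
  by (simp add: excess_def)

lemma excess_Un_disjoint:
  "finite F \<Longrightarrow> finite G \<Longrightarrow> F \<inter> G = {} \<Longrightarrow>
   excess tail head (F \<union> G) v = excess tail head F v + excess tail head G v"
  unfolding excess_def by (simp add: sum.union_disjoint)

lemma excess_Diff:
  "finite F \<Longrightarrow> G \<subseteq> F \<Longrightarrow> excess tail head (F - G) v = excess tail head F v - excess tail head G v"
  unfolding excess_def by (simp add: sum_diff finite_subset)

lemma excess_eq_net_flow_into:
  assumes "finite F" and "t \<in> Y"
    and conserv: "\<And>v. v \<in> Y \<Longrightarrow> v \<noteq> t \<Longrightarrow> excess tail head F v = 0"
  shows "excess tail head F t = (\<Sum>e\<in>F. of_bool (head e \<in> Y) - of_bool (tail e \<in> Y))"
proof -
  define S where "S = Y \<inter> (tail ` F \<union> head ` F)"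
  have "finite S" using \<open>finite F\<close> by (simp add: S_def)
  have "(\<Sum>e\<in>F. of_bool (head e \<in> Y) - of_bool (tail e \<in> Y))
      = (\<Sum>e\<in>F. \<Sum>v\<in>S. of_bool (head e = v) - of_bool (tail e = v) :: int)"
    using \<open>finite S\<close> by (intro sum.cong) (auto simp: sum_subtractf S_def)
  also have "\<dots> = (\<Sum>v\<in>S. excess tail head F v)"
    unfolding excess_def by (rule sum.swap)
  also have "\<dots> = (\<Sum>v\<in>S. if v = t then excess tail head F t else 0)"
    by (rule sum.cong) (use conserv in \<open>auto simp: S_def\<close>)
  also have "\<dots> = excess tail head F t"
    using \<open>finite S\<close> \<open>t \<in> Y\<close> by (auto simp: S_def excess_def intro!: sum.neutral)
  finally show ?thesis ..
qed

lemma path_distinct_edges: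
  assumes "is_path tail head W E vs es"
  shows "distinct es"
  unfolding distinct_conv_nth
proof (intro allI impI)
  fix i j assume "i < length es" "j < length es" "i \<noteq> j"
  with assms have "vs ! i \<noteq> vs ! j" and "tail (es ! i) = vs ! i" "tail (es ! j) = vs ! j"
    unfolding is_path_def by (auto simp: nth_eq_iff_index_eq)
  then show "es ! i \<noteq> es ! j" by metis
qed

lemma path_edges_subset: "is_path tail head W E vs es \<Longrightarrow> set es \<subseteq> E"
  unfolding is_path_def by (metis in_set_conv_nth subsetI)

lemma excess_path_edges:
  assumes "is_path tail head W E vs es"
  shows "excess tail head (set es) v = of_bool (last vs = v) - of_bool (hd vs = v)"
proof -
  let ?at = "\<lambda>j. of_bool (vs ! j = v) :: int"
  have "excess tail head (set es) v = (\<Sum>j<length es. of_bool (head (es ! j) = v) - of_bool (tail (es ! j) = v))"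
    unfolding excess_def using path_distinct_edges[OF assms]
    by (simp add: sum_list_distinct_conv_sum_set[symmetric] sum_list_sum_nth atLeast0LessThan)
  also have "\<dots> = (\<Sum>j<length es. ?at (Suc j) - ?at j)"
    using assms unfolding is_path_def by (intro sum.cong) auto
  also have "\<dots> = ?at (length es) - ?at 0"
    by (rule sum_lessThan_telescope)
  also have "\<dots> = of_bool (last vs = v) - of_bool (hd vs = v)"
    using assms unfolding is_path_def by (simp add: last_conv_nth hd_conv_nth)
  finally show ?thesis .
qed

lemma is_path_mono: "is_path tail head W E vs es \<Longrightarrow> E \<subseteq> E' \<Longrightarrow> is_path tail head W E' vs es"
  unfolding is_path_def by blast

lemma is_path_drop:
  "is_path tail head W E vs es \<Longrightarrow> m < length vs \<Longrightarrow> is_path tail head W E (drop m vs) (drop m es)"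
  unfolding is_path_def by (auto simp: set_drop_subset[THEN subsetD] dest: in_set_dropD)

lemma is_path_take:
  "is_path tail head W E vs es \<Longrightarrow> m < length vs \<Longrightarrow> is_path tail head W E (take (Suc m) vs) (take m es)"
  unfolding is_path_def by (auto simp: set_take_subset[THEN subsetD] dest: in_set_takeD)

lemma is_path_snoc:
  assumes "is_path tail head W E vs es" "e \<in> E" "tail e = last vs" "head e = v" "v \<in> W" "v \<notin> set vs"
  shows "is_path tail head W E (vs @ [v]) (es @ [e])"
  using assms unfolding is_path_def
  by (auto simp: nth_append last_conv_nth less_Suc_eq)

definition arc :: "('e \<Rightarrow> 'v) \<Rightarrow> ('e \<Rightarrow> 'v) \<Rightarrow> 'e set \<Rightarrow> 'v \<Rightarrow> 'v \<Rightarrow> bool" where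
  "arc tail head E u v \<longleftrightarrow> (\<exists>e\<in>E. tail e = u \<and> head e = v)"

lemma arc_rtranclp_imp_path:
  assumes "(arc tail head E)\<^sup>*\<^sup>* a b" "a \<in> W" "is_digraph tail head W E"
  shows "\<exists>vs es. is_path tail head W E vs es \<and> hd vs = a \<and> last vs = b"
  using assms(1)
proof (induction rule: rtranclp_induct)
  case base
  show ?case
    using \<open>a \<in> W\<close> by (intro exI[of _ "[a]"] exI[of _ "[]"]) (simp add: is_path_def)
next
  case (step u v)
  then obtain vs es where p: "is_path tail head W E vs es" "hd vs = a" "last vs = u"
    by blast
  from step(2) obtain e where e: "e \<in> E" "tail e = u" "head e = v"
    by (auto simp: arc_def)
  show ?case
  proof (cases "v \<in> set vs")
    case True
    then obtain j where j: "j < length vs" "vs ! j = v"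
      by (auto simp: in_set_conv_nth)
    have "hd (take (Suc j) vs) = a"
      using p(2) j by (cases vs) auto
    moreover have "last (take (Suc j) vs) = v"
      using j by (simp add: take_Suc_conv_app_nth)
    ultimately show ?thesis using is_path_take[OF p(1) j(1)] by blast
  next
    case False
    have "v \<in> W" using e assms(3) by (auto simp: is_digraph_def)
    with is_path_snoc[OF p(1) e(1)] e p False
    have "is_path tail head W E (vs @ [v]) (es @ [e])" by simp
    moreover have "hd (vs @ [v]) = a" using p by (auto simp: is_path_def)
    ultimately show ?thesis by fastforce
  qed
qed

definition unit_flow :: "('e \<Rightarrow> 'v) \<Rightarrow> ('e \<Rightarrow> 'v) \<Rightarrow> 'e set \<Rightarrow> 'v \<Rightarrow> 'v \<Rightarrow> 'e set \<Rightarrow> nat \<Rightarrow> bool" where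
  "unit_flow tail head E s t F m \<longleftrightarrow>
     finite F \<and> F \<subseteq> E \<and> excess tail head F t = int m \<and>
     (\<forall>v. v \<noteq> s \<and> v \<noteq> t \<longrightarrow> excess tail head F v = 0)"

text \<open>Residual arcs of a unit flow F: an edge outside F is used forwards, tagged True;
  an edge of F backwards, tagged False.\<close>

definition res_tail :: "('e \<Rightarrow> 'v) \<Rightarrow> ('e \<Rightarrow> 'v) \<Rightarrow> 'e \<times> bool \<Rightarrow> 'v" where
  "res_tail tail head r = (if snd r then tail (fst r) else head (fst r))"

definition res_head :: "('e \<Rightarrow> 'v) \<Rightarrow> ('e \<Rightarrow> 'v) \<Rightarrow> 'e \<times> bool \<Rightarrow> 'v" where
  "res_head tail head r = (if snd r then head (fst r) else tail (fst r))"

definition residual_arcs :: "'e set \<Rightarrow> 'e set \<Rightarrow> ('e \<times> bool) set" where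
  "residual_arcs E F = (\<lambda>e. (e, True)) ` (E - F) \<union> (\<lambda>e. (e, False)) ` F"

lemma residual_digraph:
  "is_digraph tail head W E \<Longrightarrow> F \<subseteq> E \<Longrightarrow>
   is_digraph (res_tail tail head) (res_head tail head) W (residual_arcs E F)"
  by (auto simp: is_digraph_def residual_arcs_def res_tail_def res_head_def)

lemma finite_Pair_preimage: "finite R \<Longrightarrow> finite {x. (x, y) \<in> R}"
  using finite_vimageI[of R "\<lambda>x. (x, y)"] by (simp add: inj_def vimage_def)

lemma excess_residual:
  assumes "finite R"
  shows "excess (res_tail tail head) (res_head tail head) R v =
     excess tail head {e. (e, True) \<in> R} v - excess tail head {e. (e, False) \<in> R} v"
proof -
  let ?Fw = "{e. (e, True) \<in> R}" and ?Bw = "{e. (e, False) \<in> R}"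
  have R: "R = (\<lambda>e. (e, True)) ` ?Fw \<union> (\<lambda>e. (e, False)) ` ?Bw"
  proof (rule set_eqI)
    fix r
    show "r \<in> R \<longleftrightarrow> r \<in> (\<lambda>e. (e, True)) ` ?Fw \<union> (\<lambda>e. (e, False)) ` ?Bw"
      by (cases r, cases "snd r") auto
  qed
  have "finite ?Fw" "finite ?Bw"
    using assms by (simp_all add: finite_Pair_preimage)
  then have "excess (res_tail tail head) (res_head tail head) R v =
      excess (res_tail tail head) (res_head tail head) ((\<lambda>e. (e, True)) ` ?Fw) v +
      excess (res_tail tail head) (res_head tail head) ((\<lambda>e. (e, False)) ` ?Bw) v"
    by (subst R, intro excess_Un_disjoint) auto
  also have "\<dots> = excess tail head ?Fw v - excess tail head ?Bw v"
    unfolding excess_def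
    by (simp add: sum.reindex inj_on_def res_tail_def res_head_def sum_negf[symmetric])
  finally show ?thesis .
qed

lemma unit_flow_augment:
  assumes flow: "unit_flow tail head E s t F m" and "s \<noteq> t"
    and path: "is_path (res_tail tail head) (res_head tail head) W (residual_arcs E F) vs es"
    and "hd vs = s" "last vs = t"
  shows "\<exists>F'. unit_flow tail head E s t F' (Suc m)"
proof -
  define Fw where "Fw = {e. (e, True) \<in> set es}"
  define Bw where "Bw = {e. (e, False) \<in> set es}"
  have es: "set es \<subseteq> residual_arcs E F"
    using path by (rule path_edges_subset)
  have "finite F" "F \<subseteq> E" using flow by (auto simp: unit_flow_def)
  have "finite Fw"
    unfolding Fw_def by (simp add: finite_Pair_preimage)
  have "Bw \<subseteq> F" "Fw \<subseteq> E - F"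
    using es by (auto simp: Fw_def Bw_def residual_arcs_def)
  define F' where "F' = (F - Bw) \<union> Fw"
  have "excess tail head F' v = excess tail head F v + of_bool (t = v) - of_bool (s = v)" for v
  proof -
    have "excess tail head F' v = excess tail head (F - Bw) v + excess tail head Fw v"
      unfolding F'_def using \<open>finite F\<close> \<open>finite Fw\<close> \<open>Fw \<subseteq> E - F\<close>
      by (intro excess_Un_disjoint) auto
    moreover have "excess tail head (F - Bw) v = excess tail head F v - excess tail head Bw v"
      using \<open>finite F\<close> \<open>Bw \<subseteq> F\<close> by (rule excess_Diff)
    moreover have "excess tail head Fw v - excess tail head Bw v = of_bool (t = v) - of_bool (s = v)"
      using excess_residual[of "set es" tail head v] excess_path_edges[OF path, of v]
        \<open>hd vs = s\<close> \<open>last vs = t\<close>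
      unfolding Fw_def Bw_def by simp
    ultimately show ?thesis by simp
  qed
  then have "unit_flow tail head E s t F' (Suc m)"
    using flow \<open>s \<noteq> t\<close> \<open>finite Fw\<close> \<open>Fw \<subseteq> E - F\<close> by (auto simp: unit_flow_def F'_def)
  then show ?thesis ..
qed

text \<open>The cut Y consists of the vertices not reachable from s in the residual graph: every
  edge entering it carries flow and no flow edge leaves it.\<close>

lemma unit_flow_saturates_cut:
  assumes flow: "unit_flow tail head E s t F m" and D: "is_digraph tail head W E"
    and tW: "t \<in> W"
    and not_reach: "\<not> (arc (res_tail tail head) (res_head tail head) (residual_arcs E F))\<^sup>*\<^sup>* s t"
  obtains Y where "Y \<subseteq> W" "t \<in> Y" "s \<notin> Y" "in_edges tail head E Y \<subseteq> F"
    "m = card (in_edges tail head E Y)"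
proof -
  define R where "R = {v. (arc (res_tail tail head) (res_head tail head) (residual_arcs E F))\<^sup>*\<^sup>* s v}"
  define Y where "Y = W - R"
  have "finite F" "F \<subseteq> E" and flow_value: "excess tail head F t = int m"
    and conserv: "\<forall>v. v \<noteq> s \<and> v \<noteq> t \<longrightarrow> excess tail head F v = 0"
    using flow by (auto simp: unit_flow_def)
  have Y: "Y \<subseteq> W" "t \<in> Y" "s \<notin> Y"
    using tW not_reach by (auto simp: Y_def R_def)
  have R_closed: "v \<in> R" if "u \<in> R" "r \<in> residual_arcs E F"
    "res_tail tail head r = u" "res_head tail head r = v" for u v r
    using that unfolding R_def arc_def by (blast intro: rtranclp.rtrancl_into_rtrancl)
  have entering: "e \<in> F" if "e \<in> E" "tail e \<notin> Y" "head e \<in> Y" for e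
    using that R_closed[of "tail e" "(e, True)"] D
    by (force simp: Y_def residual_arcs_def res_tail_def res_head_def is_digraph_def)
  have not_leaving: "\<not> (tail e \<in> Y \<and> head e \<notin> Y)" if "e \<in> F" for e
    using that R_closed[of "head e" "(e, False)"] D \<open>F \<subseteq> E\<close>
    by (force simp: Y_def residual_arcs_def res_tail_def res_head_def is_digraph_def)
  have sub: "in_edges tail head E Y \<subseteq> F"
    using entering by (auto simp: in_edges_def)
  have "excess tail head F t = (\<Sum>e\<in>F. of_bool (head e \<in> Y) - of_bool (tail e \<in> Y))"
    by (rule excess_eq_net_flow_into[OF \<open>finite F\<close> \<open>t \<in> Y\<close>]) (use conserv Y in auto)
  then have "int m = (\<Sum>e\<in>F. of_bool (head e \<in> Y) - of_bool (tail e \<in> Y))"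
    using flow_value by simp
  also have "\<dots> = (\<Sum>e\<in>F. of_bool (e \<in> in_edges tail head E Y))"
    using not_leaving \<open>F \<subseteq> E\<close> by (intro sum.cong) (auto simp: in_edges_def)
  also have "\<dots> = int (card (in_edges tail head E Y))"
    using \<open>finite F\<close> by (simp add: inf.absorb2[OF sub])
  finally have "m = card (in_edges tail head E Y)"
    by simp
  with Y sub show thesis by (rule that)
qed

lemma unit_flow_exists:
  assumes D: "is_digraph tail head W E" and "s \<in> W" "t \<in> W" "s \<noteq> t"
    and cut: "\<And>Y. Y \<subseteq> W \<Longrightarrow> t \<in> Y \<Longrightarrow> s \<notin> Y \<Longrightarrow>
               infinite (in_edges tail head E Y) \<or> k \<le> card (in_edges tail head E Y)"
  shows "m \<le> k \<Longrightarrow> \<exists>F. unit_flow tail head E s t F m"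
proof (induction m)
  case 0
  have "unit_flow tail head E s t {} 0" by (simp add: unit_flow_def)
  then show ?case ..
next
  case (Suc m)
  then obtain F where flow: "unit_flow tail head E s t F m" by auto
  then have "F \<subseteq> E" "finite F" by (auto simp: unit_flow_def)
  show ?case
  proof (cases "(arc (res_tail tail head) (res_head tail head) (residual_arcs E F))\<^sup>*\<^sup>* s t")
    case True
    then show ?thesis
      using arc_rtranclp_imp_path[OF True \<open>s \<in> W\<close> residual_digraph[OF D \<open>F \<subseteq> E\<close>]]
        unit_flow_augment[OF flow \<open>s \<noteq> t\<close>] by blast
  next
    case False
    then obtain Y where "Y \<subseteq> W" "t \<in> Y" "s \<notin> Y" "in_edges tail head E Y \<subseteq> F"
      "m = card (in_edges tail head E Y)"
      using unit_flow_saturates_cut[OF flow D \<open>t \<in> W\<close>] by blast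
    moreover have "finite (in_edges tail head E Y)"
      using \<open>in_edges tail head E Y \<subseteq> F\<close> \<open>finite F\<close> by (rule finite_subset)
    ultimately show ?thesis
      using cut[of Y] Suc.prems by simp
  qed
qed

lemma unit_flow_has_path:
  assumes flow: "unit_flow tail head E s t F (Suc m)" and D: "is_digraph tail head W E" and "s \<in> W"
  shows "\<exists>vs es. is_path tail head W F vs es \<and> hd vs = s \<and> last vs = t"
proof -
  have "finite F" "F \<subseteq> E" and flow_value: "excess tail head F t = int (Suc m)"
    and conserv: "\<forall>v. v \<noteq> s \<and> v \<noteq> t \<longrightarrow> excess tail head F v = 0"
    using flow by (auto simp: unit_flow_def)
  have DF: "is_digraph tail head W F"
    using D \<open>F \<subseteq> E\<close> by (auto simp: is_digraph_def)
  have "(arc tail head F)\<^sup>*\<^sup>* s t"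
  proof (rule ccontr)
    assume not_reach: "\<not> (arc tail head F)\<^sup>*\<^sup>* s t"
    define Y where "Y = - {v. (arc tail head F)\<^sup>*\<^sup>* s v}"
    have "t \<in> Y" "s \<notin> Y" using not_reach by (auto simp: Y_def)
    have not_entering: "\<not> (tail e \<notin> Y \<and> head e \<in> Y)" if "e \<in> F" for e
      using that unfolding Y_def arc_def by (blast intro: rtranclp.rtrancl_into_rtrancl)
    have "excess tail head F t = (\<Sum>e\<in>F. of_bool (head e \<in> Y) - of_bool (tail e \<in> Y))"
      by (rule excess_eq_net_flow_into[OF \<open>finite F\<close> \<open>t \<in> Y\<close>]) (use conserv \<open>s \<notin> Y\<close> in auto)
    also have "\<dots> \<le> 0"
      using not_entering by (intro sum_nonpos) auto
    finally show False using flow_value by simp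
  qed
  then show ?thesis using arc_rtranclp_imp_path[OF _ \<open>s \<in> W\<close> DF] by blast
qed

lemma unit_flow_decompose:
  assumes D: "is_digraph tail head W E" and "s \<in> W" "s \<noteq> t"
  shows "unit_flow tail head E s t F m \<Longrightarrow>
    \<exists>P. (\<forall>i<m. is_path tail head W E (fst (P i)) (snd (P i)) \<and>
              hd (fst (P i)) = s \<and> last (fst (P i)) = t \<and> set (snd (P i)) \<subseteq> F) \<and>
        (\<forall>i<m. \<forall>j<m. i \<noteq> j \<longrightarrow> set (snd (P i)) \<inter> set (snd (P j)) = {})"
proof (induction m arbitrary: F)
  case 0
  show ?case by simp
next
  case (Suc m)
  then have "finite F" "F \<subseteq> E" by (auto simp: unit_flow_def)
  obtain vs es where p: "is_path tail head W F vs es" "hd vs = s" "last vs = t"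
    using unit_flow_has_path[OF Suc.prems D \<open>s \<in> W\<close>] by blast
  have "set es \<subseteq> F" using p(1) by (rule path_edges_subset)
  have "excess tail head (F - set es) v = excess tail head F v - (of_bool (t = v) - of_bool (s = v))" for v
    by (simp only: excess_Diff[OF \<open>finite F\<close> \<open>set es \<subseteq> F\<close>] excess_path_edges[OF p(1)] p(2,3))
  then have "unit_flow tail head E s t (F - set es) m"
    using Suc.prems \<open>s \<noteq> t\<close> by (auto simp: unit_flow_def)
  then obtain P where P: "\<forall>i<m. is_path tail head W E (fst (P i)) (snd (P i)) \<and>
      hd (fst (P i)) = s \<and> last (fst (P i)) = t \<and> set (snd (P i)) \<subseteq> F - set es"
    "\<forall>i<m. \<forall>j<m. i \<noteq> j \<longrightarrow> set (snd (P i)) \<inter> set (snd (P j)) = {}"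
    using Suc.IH by blast
  have "is_path tail head W E vs es" using is_path_mono[OF p(1) \<open>F \<subseteq> E\<close>] .
  then show ?case
    using P p \<open>set es \<subseteq> F\<close>
    by (intro exI[of _ "P(m := (vs, es))"]) (auto simp: less_Suc_eq; blast)
qed

theorem edge_menger:
  assumes D: "is_digraph tail head W E" and "s \<in> W" "t \<in> W" "s \<noteq> t"
    and cut: "\<And>Y. Y \<subseteq> W \<Longrightarrow> t \<in> Y \<Longrightarrow> s \<notin> Y \<Longrightarrow>
               infinite (in_edges tail head E Y) \<or> k \<le> card (in_edges tail head E Y)"
  shows "\<exists>P. (\<forall>i<k. is_path tail head W E (fst (P i)) (snd (P i)) \<and>
              hd (fst (P i)) = s \<and> last (fst (P i)) = t) \<and>
            (\<forall>i<k. \<forall>j<k. i \<noteq> j \<longrightarrow> set (snd (P i)) \<inter> set (snd (P j)) = {})"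
proof -
  obtain F where "unit_flow tail head E s t F k"
    using unit_flow_exists[OF assms order_refl] ..
  from unit_flow_decompose[OF D \<open>s \<in> W\<close> \<open>s \<noteq> t\<close> this] show ?thesis
    by blast
qed

lemma path_from_to_suffix:
  assumes path: "is_path tail head W E vs es" and "hd vs \<in> S"
  obtains q where "path_from_to tail head W E (drop q vs) (drop q es) S {last vs}"
proof -
  define M where "M = {m. m < length vs \<and> vs ! m \<in> S}"
  define q where "q = Max M"
  have "vs \<noteq> []" using path by (simp add: is_path_def)
  then have "0 \<in> M" using \<open>hd vs \<in> S\<close> by (simp add: M_def hd_conv_nth)
  moreover have "finite M" by (simp add: M_def)
  ultimately have "q \<in> M" and q_max: "\<And>m. m \<in> M \<Longrightarrow> m \<le> q"
    unfolding q_def by (auto intro: Max_in)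
  then have "q < length vs" "vs ! q \<in> S" by (auto simp: M_def)
  have "set (drop q vs) \<inter> S \<subseteq> {vs ! q}"
  proof
    fix x assume x: "x \<in> set (drop q vs) \<inter> S"
    then obtain r where "r < length vs - q" "x = drop q vs ! r"
      by (auto simp: in_set_conv_nth)
    then have "q + r < length vs" "x = vs ! (q + r)"
      using \<open>q < length vs\<close> by auto
    with x have "q + r \<in> M" by (simp add: M_def)
    then have "r = 0" using q_max by fastforce
    then show "x \<in> {vs ! q}" using \<open>x = vs ! (q + r)\<close> by simp
  qed
  moreover have "hd (drop q vs) = vs ! q" "last (drop q vs) = last vs" "drop q vs \<noteq> []"
    using \<open>q < length vs\<close> by (simp_all add: hd_drop_conv_nth)
  moreover note hd_in_set[OF \<open>drop q vs \<noteq> []\<close>] last_in_set[OF \<open>drop q vs \<noteq> []\<close>]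
  ultimately have "set (drop q vs) \<inter> S = {hd (drop q vs)}"
    "set (drop q vs) \<inter> {last vs} = {last (drop q vs)}"
    using \<open>vs ! q \<in> S\<close> by auto
  then show thesis
    using is_path_drop[OF path \<open>q < length vs\<close>] that by (simp add: path_from_to_def)
qed

lemma is_path_map_inj:
  assumes path: "is_path tail' head' W' E' (map f vs) (map g es)" and "inj f"
    and tail: "\<And>e. tail' (g e) = f (tail e)" and head: "\<And>e. head' (g e) = f (head e)"
    and E: "\<And>e. g e \<in> E' \<Longrightarrow> e \<in> E" and W: "\<And>x. f x \<in> W' \<Longrightarrow> x \<in> W"
  shows "is_path tail head W E vs es"
  unfolding is_path_def
proof (intro conjI allI impI)
  show "vs \<noteq> []" "distinct vs" "length vs = Suc (length es)"
    using path by (simp_all add: is_path_def distinct_map)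
  show "set vs \<subseteq> W"
    using path W by (auto simp: is_path_def)
  fix j assume "j < length es"
  then have "g (es ! j) \<in> E'" "tail' (g (es ! j)) = f (vs ! j)" "head' (g (es ! j)) = f (vs ! Suc j)"
    using path by (auto simp: is_path_def)
  then show "es ! j \<in> E" "tail (es ! j) = vs ! j" "head (es ! j) = vs ! Suc j"
    using E tail head \<open>inj f\<close> by (simp_all add: inj_eq)
qed

text \<open>In the auxiliary digraph None is the new source, Some (Inr i) the hub of index i and
  Some (Inl v) the vertex v of D.\<close>

fun aux_tail :: "('e \<Rightarrow> 'v) \<Rightarrow> 'e + (nat + nat \<times> 'v) \<Rightarrow> ('v + nat) option" where
  "aux_tail tail (Inl e) = Some (Inl (tail e))"
| "aux_tail tail (Inr (Inl i)) = None"
| "aux_tail tail (Inr (Inr (i, v))) = Some (Inr i)"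

fun aux_head :: "('e \<Rightarrow> 'v) \<Rightarrow> 'e + (nat + nat \<times> 'v) \<Rightarrow> ('v + nat) option" where
  "aux_head head (Inl e) = Some (Inl (head e))"
| "aux_head head (Inr (Inl i)) = Some (Inr i)"
| "aux_head head (Inr (Inr (i, v))) = Some (Inl v)"

definition aux_vertices :: "nat \<Rightarrow> 'v set \<Rightarrow> ('v + nat) option set" where
  "aux_vertices k V = insert None (Some ` Inr ` {..<k} \<union> Some ` Inl ` V)"

definition aux_arcs :: "'e set \<Rightarrow> nat \<Rightarrow> (nat \<Rightarrow> 'v set) \<Rightarrow> ('e + (nat + nat \<times> 'v)) set" where
  "aux_arcs A k Vs = Inl ` A \<union> Inr ` Inl ` {..<k} \<union> Inr ` Inr ` {(i, v). i < k \<and> v \<in> Vs i}"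

lemma aux_arcsE:
  assumes "x \<in> aux_arcs A k Vs"
  obtains (arc) e where "x = Inl e" "e \<in> A"
    | (source) i where "x = Inr (Inl i)" "i < k"
    | (hub) i v where "x = Inr (Inr (i, v))" "i < k" "v \<in> Vs i"
  using assms unfolding aux_arcs_def by blast

lemma aux_digraph:
  assumes "is_digraph tail head V A" "\<forall>i<k. Vs i \<subseteq> V"
  shows "is_digraph (aux_tail tail) (aux_head head) (aux_vertices k V) (aux_arcs A k Vs)"
  unfolding is_digraph_def
proof
  fix x assume "x \<in> aux_arcs A k Vs"
  then show "aux_tail tail x \<in> aux_vertices k V \<and> aux_head head x \<in> aux_vertices k V"
    using assms by (cases rule: aux_arcsE) (auto simp: aux_vertices_def is_digraph_def image_iff)
qed

lemma aux_cut:
  fixes tail head :: "'e \<Rightarrow> 'v"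
  assumes cut: "\<And>X. X \<subseteq> V \<Longrightarrow> X \<noteq> {} \<Longrightarrow> infinite (in_edges tail head A X) \<or>
                  card {i. i < k \<and> Vs i \<inter> X = {}} \<le> card (in_edges tail head A X)"
    and Y: "Y \<subseteq> aux_vertices k V" "Some (Inl w) \<in> Y" "None \<notin> Y"
  defines "IE \<equiv> in_edges (aux_tail tail) (aux_head head) (aux_arcs A k Vs) Y"
  shows "infinite IE \<or> k \<le> card IE"
proof (cases "finite IE")
  case True
  define X where "X = {v. Some (Inl v) \<in> Y}"
  define R where "R = in_edges tail head A X"
  define I0 where "I0 = {i. i < k \<and> Vs i \<inter> X = {}}"
  define J where "J = {i. i < k \<and> Vs i \<inter> X \<noteq> {}}"
  define hub_arc :: "nat \<Rightarrow> 'e + (nat + nat \<times> 'v)" where "hub_arc i =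
    (if Some (Inr i) \<in> Y then Inr (Inl i) else Inr (Inr (i, SOME v. v \<in> Vs i \<inter> X)))" for i
  have "X \<subseteq> V" "X \<noteq> {}"
    using Y by (auto simp: X_def aux_vertices_def)
  have "Inl ` R \<subseteq> IE"
    by (auto simp: IE_def R_def X_def in_edges_def aux_arcs_def)
  moreover have "hub_arc ` J \<subseteq> IE"
  proof
    fix x assume "x \<in> hub_arc ` J"
    then obtain i where "i \<in> J" "x = hub_arc i" by blast
    then have "Vs i \<inter> X \<noteq> {}" by (simp add: J_def)
    then have "(SOME v. v \<in> Vs i \<inter> X) \<in> Vs i \<inter> X"
      by (rule some_in_eq[THEN iffD2])
    with \<open>i \<in> J\<close> \<open>None \<notin> Y\<close> show "x \<in> IE"
      by (auto simp: \<open>x = hub_arc i\<close> hub_arc_def IE_def J_def X_def in_edges_def aux_arcs_def)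
  qed
  moreover have "inj_on hub_arc J"
    by (auto simp: inj_on_def hub_arc_def split: if_splits)
  moreover have "Inl ` R \<inter> hub_arc ` J = {}"
    by (auto simp: hub_arc_def)
  ultimately have "card R + card J \<le> card IE"
    using \<open>finite IE\<close> card_mono[of IE "Inl ` R \<union> hub_arc ` J"]
    by (simp add: card_Un_disjoint finite_subset card_image finite_image_iff)
  moreover have "card I0 + card J = k"
  proof -
    have "I0 \<union> J = {..<k}" "I0 \<inter> J = {}" by (auto simp: I0_def J_def)
    then show ?thesis
      using card_Un_disjoint[of I0 J] by (metis card_lessThan finite_Un finite_lessThan)
  qed
  moreover have "finite R"
    using \<open>Inl ` R \<subseteq> IE\<close> \<open>finite IE\<close> by (metis finite_subset finite_imageD inj_Inl)
  ultimately show ?thesis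
    using cut[OF \<open>X \<subseteq> V\<close> \<open>X \<noteq> {}\<close>] by (simp add: R_def I0_def)
qed simp

context
  fixes tail head :: "'e \<Rightarrow> 'v" and A :: "'e set" and k :: nat and Vs :: "nat \<Rightarrow> 'v set"
    and W :: "('v + nat) option set" and vs :: "('v + nat) option list"
    and es :: "('e + (nat + nat \<times> 'v)) list"
  assumes path: "is_path (aux_tail tail) (aux_head head) W (aux_arcs A k Vs) vs es"
    and from_source: "hd vs = None"
begin

lemma aux_path_start:
  assumes "last vs = Some (Inl w)"
  obtains j v where "j < k" "v \<in> Vs j" "2 \<le> length es" "es ! 0 = Inr (Inl j)" "vs ! 2 = Some (Inl v)"
proof -
  have len: "length vs = Suc (length es)" and "vs \<noteq> []"
    and arcs: "\<And>m. m < length es \<Longrightarrow> es ! m \<in> aux_arcs A k Vs \<and>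
       aux_tail tail (es ! m) = vs ! m \<and> aux_head head (es ! m) = vs ! Suc m"
    using path unfolding is_path_def by blast+
  have "vs ! 0 = None" "vs ! length es = Some (Inl w)"
    using from_source assms \<open>vs \<noteq> []\<close> len by (simp_all add: hd_conv_nth last_conv_nth)
  then have "0 < length es" by (cases "length es") auto
  with arcs[of 0] \<open>vs ! 0 = None\<close>
  have "es ! 0 \<in> aux_arcs A k Vs" "aux_tail tail (es ! 0) = None" by auto
  then obtain j where j: "es ! 0 = Inr (Inl j)" "j < k"
    by (cases rule: aux_arcsE) auto
  then have "vs ! 1 = Some (Inr j)"
    using arcs[OF \<open>0 < length es\<close>] by simp
  then have "length es \<noteq> 1"
    using \<open>vs ! length es = Some (Inl w)\<close> by auto
  then have "1 < length es"
    using \<open>0 < length es\<close> by linarith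
  with arcs[of 1] \<open>vs ! 1 = Some (Inr j)\<close>
  have "es ! 1 \<in> aux_arcs A k Vs" "aux_tail tail (es ! 1) = Some (Inr j)" by auto
  then obtain v where "v \<in> Vs j" "es ! 1 = Inr (Inr (j, v))"
    by (cases rule: aux_arcsE) auto
  then have "vs ! 2 = Some (Inl v)"
    using arcs[OF \<open>1 < length es\<close>] by (simp add: numeral_2_eq_2)
  with j \<open>v \<in> Vs j\<close> \<open>1 < length es\<close> show thesis
    by (intro that) auto
qed

text \<open>Only the source precedes a hub, so after its second vertex the path stays in D.\<close>

lemma aux_path_later_vertex:
  assumes "2 \<le> m" "m < length vs"
  obtains x where "vs ! m = Some (Inl x)"
proof -
  obtain m' where "m = Suc m'" "m' \<noteq> 0" using assms(1) by (cases m) auto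
  have "m' < length es" "distinct vs" "vs ! 0 = None"
    using path assms from_source \<open>m = Suc m'\<close> by (auto simp: is_path_def hd_conv_nth)
  with path have "es ! m' \<in> aux_arcs A k Vs" "aux_tail tail (es ! m') = vs ! m'"
    "aux_head head (es ! m') = vs ! m"
    using \<open>m = Suc m'\<close> by (auto simp: is_path_def)
  moreover have "vs ! m' \<noteq> vs ! 0"
    using \<open>distinct vs\<close> \<open>m' \<noteq> 0\<close> \<open>m' < length es\<close> path
    by (simp add: is_path_def nth_eq_iff_index_eq)
  ultimately show thesis
    using \<open>vs ! 0 = None\<close> by (cases rule: aux_arcsE) (auto intro: that[OF sym])
qed

lemma aux_path_drop2_eq_map:
  obtains vs' es' where "drop 2 vs = map (Some \<circ> Inl) vs'" "drop 2 es = map Inl es'"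
proof -
  have "\<exists>vs'. drop 2 vs = map (Some \<circ> Inl) vs'"
    unfolding ex_map_conv
  proof
    fix y assume "y \<in> set (drop 2 vs)"
    then obtain i where "i < length (drop 2 vs)" "y = drop 2 vs ! i"
      by (auto simp: in_set_conv_nth)
    then have "Suc (Suc i) < length vs" "y = vs ! Suc (Suc i)"
      by auto
    then obtain x where "y = Some (Inl x)"
      using aux_path_later_vertex[of "Suc (Suc i)"] by auto
    then show "\<exists>x. y = (Some \<circ> Inl) x" by auto
  qed
  moreover have "\<exists>es'. drop 2 es = map Inl es'"
    unfolding ex_map_conv
  proof
    fix y assume "y \<in> set (drop 2 es)"
    then obtain i where "i < length (drop 2 es)" "y = drop 2 es ! i"
      by (auto simp: in_set_conv_nth)
    then have "2 \<le> Suc (Suc i)" "Suc (Suc i) < length es" "y = es ! Suc (Suc i)"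
      by auto
    moreover obtain x where "vs ! Suc (Suc i) = Some (Inl x)"
      using aux_path_later_vertex[OF \<open>2 \<le> Suc (Suc i)\<close>] \<open>Suc (Suc i) < length es\<close> path
      by (auto simp: is_path_def)
    ultimately have "y \<in> aux_arcs A k Vs" "aux_tail tail y = Some (Inl x)"
      using path by (auto simp: is_path_def)
    then show "\<exists>e. y = Inl e"
      by (cases rule: aux_arcsE) auto
  qed
  ultimately show thesis using that by blast
qed

end

lemma aux_path_yields_path:
  assumes path: "is_path (aux_tail tail) (aux_head head) (aux_vertices k V) (aux_arcs A k Vs) vs es"
    and "hd vs = None" "last vs = Some (Inl w)"
  obtains j vs' es' where "j < k" "Inr (Inl j) \<in> set es"
    "path_from_to tail head V A vs' es' (Vs j) {w}" "Inl ` set es' \<subseteq> set es"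
proof -
  obtain j v where "j < k" "v \<in> Vs j" "2 \<le> length es" "es ! 0 = Inr (Inl j)" "vs ! 2 = Some (Inl v)"
    using aux_path_start[OF path assms(2,3)] .
  obtain vs1 es1 where vs1: "drop 2 vs = map (Some \<circ> Inl) vs1" and es1: "drop 2 es = map Inl es1"
    using aux_path_drop2_eq_map[OF path \<open>hd vs = None\<close>] .
  have "2 < length vs" using path \<open>2 \<le> length es\<close> by (simp add: is_path_def)
  have "is_path tail head V A vs1 es1"
  proof (rule is_path_map_inj)
    show "is_path (aux_tail tail) (aux_head head) (aux_vertices k V) (aux_arcs A k Vs)
        (map (Some \<circ> Inl) vs1) (map Inl es1)"
      using is_path_drop[OF path \<open>2 < length vs\<close>] vs1 es1 by simp
  qed (auto simp: inj_def aux_arcs_def aux_vertices_def)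
  moreover have "vs1 \<noteq> []"
    using arg_cong[OF vs1, of length] \<open>2 < length vs\<close> by auto
  moreover have "hd vs1 = v" "last vs1 = w"
    using \<open>vs1 \<noteq> []\<close> vs1 \<open>2 < length vs\<close> \<open>vs ! 2 = Some (Inl v)\<close> \<open>last vs = Some (Inl w)\<close>
      hd_drop_conv_nth[of 2 vs] last_drop[of 2 vs]
    by (auto simp: hd_map last_map)
  ultimately obtain q where "path_from_to tail head V A (drop q vs1) (drop q es1) (Vs j) {w}"
    using path_from_to_suffix \<open>v \<in> Vs j\<close> by metis
  moreover have "Inl ` set (drop q es1) \<subseteq> set es"
    using es1 set_drop_subset[of 2 es] by (auto dest: in_set_dropD)
  moreover have "Inr (Inl j) \<in> set es"
    using \<open>2 \<le> length es\<close> \<open>es ! 0 = Inr (Inl j)\<close> by (cases es) auto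
  ultimately show thesis
    using that[OF \<open>j < k\<close>] by blast
qed

lemma inj_on_lessThan_right_inverse:
  fixes \<sigma> :: "nat \<Rightarrow> nat"
  assumes "inj_on \<sigma> {..<k}" "\<sigma> ` {..<k} \<subseteq> {..<k}"
  obtains \<tau> where "\<And>j. j < k \<Longrightarrow> \<tau> j < k \<and> \<sigma> (\<tau> j) = j"
proof -
  have "\<sigma> ` {..<k} = {..<k}"
    using assms by (intro endo_inj_surj) auto
  then have "\<forall>j\<in>{..<k}. \<exists>i. i < k \<and> \<sigma> i = j"
    by (metis imageE lessThan_iff)
  from bchoice[OF this] obtain \<tau> where "\<forall>j\<in>{..<k}. \<tau> j < k \<and> \<sigma> (\<tau> j) = j" ..
  then show thesis by (intro that[of \<tau>]) simp
qed

lemma aux_paths_yield_paths: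
  fixes tail head :: "'e \<Rightarrow> 'v"
    and P' :: "nat \<Rightarrow> ('v + nat) option list \<times> ('e + (nat + nat \<times> 'v)) list"
  assumes paths: "\<forall>i<k. is_path (aux_tail tail) (aux_head head) (aux_vertices k V) (aux_arcs A k Vs)
      (fst (P' i)) (snd (P' i)) \<and> hd (fst (P' i)) = None \<and> last (fst (P' i)) = Some (Inl w)"
    and disj: "\<forall>i<k. \<forall>j<k. i \<noteq> j \<longrightarrow> set (snd (P' i)) \<inter> set (snd (P' j)) = {}"
  shows "\<exists>P :: nat \<Rightarrow> 'v list \<times> 'e list.
      (\<forall>i<k. path_from_to tail head V A (fst (P i)) (snd (P i)) (Vs i) {w}) \<and>
      (\<forall>i<k. \<forall>j<k. i \<noteq> j \<longrightarrow> set (snd (P i)) \<inter> set (snd (P j)) = {})"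
proof -
  define good where "good i j Q \<longleftrightarrow> j < k \<and> Inr (Inl j) \<in> set (snd (P' i)) \<and>
      path_from_to tail head V A (fst Q) (snd Q) (Vs j) {w} \<and> Inl ` set (snd Q) \<subseteq> set (snd (P' i))"
    for i j Q
  have "\<exists>jQ. i < k \<longrightarrow> good i (fst jQ) (snd jQ)" for i
  proof (cases "i < k")
    case True
    with paths have "is_path (aux_tail tail) (aux_head head) (aux_vertices k V) (aux_arcs A k Vs)
        (fst (P' i)) (snd (P' i))" "hd (fst (P' i)) = None" "last (fst (P' i)) = Some (Inl w)"
      by auto
    then obtain j vs' es' where "good i j (vs', es')"
      unfolding good_def by (rule aux_path_yields_path) simp
    then show ?thesis by (intro exI[of _ "(j, vs', es')"]) simp
  qed simp
  then obtain jQ where "\<forall>i. i < k \<longrightarrow> good i (fst (jQ i)) (snd (jQ i))"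
    by metis
  note jQ = this[rule_format, unfolded good_def]
  define \<sigma> where "\<sigma> i = fst (jQ i)" for i
  have "inj_on \<sigma> {..<k}"
  proof (rule inj_onI, rule ccontr)
    fix i i' assume "i \<in> {..<k}" "i' \<in> {..<k}" "\<sigma> i = \<sigma> i'" "i \<noteq> i'"
    then have "Inr (Inl (\<sigma> i)) \<in> set (snd (P' i)) \<inter> set (snd (P' i'))"
      using jQ[of i] jQ[of i'] by (simp add: \<sigma>_def)
    with disj \<open>i \<in> {..<k}\<close> \<open>i' \<in> {..<k}\<close> \<open>i \<noteq> i'\<close> show False by blast
  qed
  moreover have "\<sigma> ` {..<k} \<subseteq> {..<k}"
    using jQ by (auto simp: \<sigma>_def)
  ultimately obtain \<tau> where \<tau>: "\<And>j. j < k \<Longrightarrow> \<tau> j < k \<and> \<sigma> (\<tau> j) = j"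
    using inj_on_lessThan_right_inverse by blast
  define P where "P j = snd (jQ (\<tau> j))" for j
  have "path_from_to tail head V A (fst (P j)) (snd (P j)) (Vs j) {w}" if "j < k" for j
    using jQ[of "\<tau> j"] \<tau>[OF that] by (simp add: P_def \<sigma>_def)
  moreover have "set (snd (P i)) \<inter> set (snd (P j)) = {}" if "i < k" "j < k" "i \<noteq> j" for i j
  proof -
    have "\<tau> i \<noteq> \<tau> j" "\<tau> i < k" "\<tau> j < k" using \<tau>[of i] \<tau>[of j] that by auto
    then have "set (snd (P' (\<tau> i))) \<inter> set (snd (P' (\<tau> j))) = {}"
      using disj by blast
    moreover have "Inl ` set (snd (P i)) \<subseteq> set (snd (P' (\<tau> i)))"
      "Inl ` set (snd (P j)) \<subseteq> set (snd (P' (\<tau> j)))"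
      using jQ \<open>\<tau> i < k\<close> \<open>\<tau> j < k\<close> by (simp_all add: P_def)
    ultimately show ?thesis by blast
  qed
  ultimately show ?thesis by blast
qed

theorem proposition3:
  fixes tail head :: "'e \<Rightarrow> 'v" and V :: "'v set" and A :: "'e set"
    and k :: nat and Vs :: "nat \<Rightarrow> 'v set" and As :: "nat \<Rightarrow> 'e set"
  assumes D: "is_digraph tail head V A"
    and sub: "\<forall>i<k. Vs i \<subseteq> V \<and> As i \<subseteq> A"
    and br: "\<forall>i<k. branching tail head (Vs i) (As i)"
    and disj: "\<forall>i<k. \<forall>j<k. i \<noteq> j \<longrightarrow> As i \<inter> As j = {}"
    and cut: "\<forall>X. X \<subseteq> V \<and> X \<noteq> {} \<longrightarrow>
               (let R = in_edges tail head (A - (\<Union>i<k. As i)) X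
                in infinite R \<or> card {i. i < k \<and> Vs i \<inter> X = {}} \<le> card R)"
  shows "\<forall>w\<in>V. \<exists>P :: nat \<Rightarrow> 'v list \<times> 'e list.
           (\<forall>i<k. path_from_to tail head V (A - (\<Union>i<k. As i)) (fst (P i)) (snd (P i)) (Vs i) {w}) \<and>
           (\<forall>i<k. \<forall>j<k. i \<noteq> j \<longrightarrow> set (snd (P i)) \<inter> set (snd (P j)) = {})"
proof
  fix w assume "w \<in> V"
  define A0 where "A0 = A - (\<Union>i<k. As i)"
  have "is_digraph (aux_tail tail) (aux_head head) (aux_vertices k V) (aux_arcs A0 k Vs)"
    using D sub by (intro aux_digraph) (auto simp: is_digraph_def A0_def)
  moreover have "infinite (in_edges (aux_tail tail) (aux_head head) (aux_arcs A0 k Vs) Y) \<or>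
      k \<le> card (in_edges (aux_tail tail) (aux_head head) (aux_arcs A0 k Vs) Y)"
    if "Y \<subseteq> aux_vertices k V" "Some (Inl w) \<in> Y" "None \<notin> Y" for Y
    using cut that by (intro aux_cut) (auto simp: A0_def Let_def)
  moreover have "None \<in> aux_vertices k V" "Some (Inl w) \<in> aux_vertices k V"
    using \<open>w \<in> V\<close> by (auto simp: aux_vertices_def)
  ultimately obtain P' where
    "\<forall>i<k. is_path (aux_tail tail) (aux_head head) (aux_vertices k V) (aux_arcs A0 k Vs)
        (fst (P' i)) (snd (P' i)) \<and> hd (fst (P' i)) = None \<and> last (fst (P' i)) = Some (Inl w)"
    "\<forall>i<k. \<forall>j<k. i \<noteq> j \<longrightarrow> set (snd (P' i)) \<inter> set (snd (P' j)) = {}"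
    using edge_menger[of "aux_tail tail" "aux_head head" "aux_vertices k V" "aux_arcs A0 k Vs"
        None "Some (Inl w)" k] by blast
  then show "\<exists>P :: nat \<Rightarrow> 'v list \<times> 'e list.
      (\<forall>i<k. path_from_to tail head V A0 (fst (P i)) (snd (P i)) (Vs i) {w}) \<and>
      (\<forall>i<k. \<forall>j<k. i \<noteq> j \<longrightarrow> set (snd (P i)) \<inter> set (snd (P j)) = {})"
    by (rule aux_paths_yield_paths)
qed

end
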